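(* Let $\sigma^{\rm TF}$ be the minimizer of $\mathcal{E}^{\rm TF}$ over $\mathcal{M}^{\rm TF}$ and $\Phi^{\rm TF}:=V_{\rm nuc}+\sigma^{\rm TF}*\log|\cdot|$. There exists $\lambda\in\mathbb{R}$ such that for almost every $x$: $\Phi^{\rm TF}(x)\geq\lambda$ if $\sigma^{\rm TF}(x)=1$; $\Phi^{\rm TF}(x)=\lambda$ if $0<\sigma^{\rm TF}(x)<1$; $\Phi^{\rm TF}(x)\leq\lambda$ if $\sigma^{\rm TF}(x)=0$.
   Context: Let $K\ge1$ be an integer, $x_1,\ldots,x_K\in\mathbb{R}^2$, $V_{\rm nuc}(x)=-\sum_{i=1}^K\log|x-x_i|$, $D(\sigma,\sigma)=-\frac12\iint\sigma(x)\log|x-y|\sigma(y)\,dx\,dy$, $\mathcal{E}^{\rm TF}[\sigma]=-\int V_{\rm nuc}\sigma+D(\sigma,\sigma)$, and $\mathcal{M}^{\rm TF}=\{\sigma\in L^\infty(\mathbb{R}^2)\cap L^1(\mathbb{R}^2,\log(2+|x|)dx):0\leq\sigma\leq1,\ \int\sigma=K\}$. The functional $\mathcal{E}^{\rm TF}$ has a unique minimizer $\sigma^{\rm TF}$ on $\mathcal{M}^{\rm TF}$. *)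

theory Defs
  imports "HOL-Analysis.Analysis"
begin

definition V_nuc :: "nat \<Rightarrow> (nat \<Rightarrow> real^2) \<Rightarrow> real^2 \<Rightarrow> real" where
  "V_nuc K xs x = - (\<Sum>i<K. ln (norm (x - xs i)))"

definition D_TF :: "(real^2 \<Rightarrow> real) \<Rightarrow> (real^2 \<Rightarrow> real) \<Rightarrow> real" where
  "D_TF \<sigma> \<tau> = - (1/2) * (\<integral>x. (\<integral>y. \<sigma> x * ln (norm (x - y)) * \<tau> y \<partial>lborel) \<partial>lborel)"

definition E_TF :: "nat \<Rightarrow> (nat \<Rightarrow> real^2) \<Rightarrow> (real^2 \<Rightarrow> real) \<Rightarrow> real" where
  "E_TF K xs \<sigma> = - (\<integral>x. V_nuc K xs x * \<sigma> x \<partial>lborel) + D_TF \<sigma> \<sigma>"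

definition M_TF :: "nat \<Rightarrow> (real^2 \<Rightarrow> real) set" where
  "M_TF K = {\<sigma>. \<sigma> \<in> borel_measurable lborel \<and> (\<forall>x. 0 \<le> \<sigma> x \<and> \<sigma> x \<le> 1)
      \<and> integrable lborel (\<lambda>x. \<sigma> x * ln (2 + norm x))
      \<and> (\<integral>x. \<sigma> x \<partial>lborel) = real K}"

definition Phi_TF :: "nat \<Rightarrow> (nat \<Rightarrow> real^2) \<Rightarrow> (real^2 \<Rightarrow> real) \<Rightarrow> real^2 \<Rightarrow> real" where
  "Phi_TF K xs \<sigma> x = V_nuc K xs x + (\<integral>y. \<sigma> y * ln (norm (x - y)) \<partial>lborel)"

end

theory Submission
  imports Defs
begin

text \<open>
  The energy is quadratic on the convex set \<open>M_TF K\<close>, and its derivative at the minimiser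
  \<open>\<sigma>\<close> in the direction of any other admissible \<open>\<tau>\<close> is \<open>-\<integral>\<Phi> (\<tau> - \<sigma>)\<close>, where
  \<open>\<Phi> = Phi_TF K xs \<sigma>\<close>; minimality gives \<open>\<integral>\<Phi> (\<tau> - \<sigma>) \<le> 0\<close>. If for some \<open>p < q\<close> both
  \<open>{\<sigma> < 1, \<Phi> > q}\<close> and \<open>{\<sigma> > 0, \<Phi> < p}\<close> had positive measure, moving a small amount of mass
  from a bounded piece of the second set to a bounded piece of the first would produce an admissible
  \<open>\<tau>\<close> with \<open>\<integral>\<Phi> (\<tau> - \<sigma>) > 0\<close>. So for \<open>p < q\<close> one of the two sets is null, and the infimum
  of the levels \<open>q\<close> for which the first one is null is the required \<open>\<lambda>\<close>.
  All integrals are finite thanks to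
  \<open>\<bar>ln \<bar>x - y\<bar>\<bar> \<le> ln (2 + \<bar>x\<bar>) + ln (2 + \<bar>y\<bar>) + ln\<^sup>- \<bar>x - y\<bar>\<close> with \<open>ln\<^sup>-\<close> integrable.
\<close>

section \<open>The logarithmic kernel\<close>

text \<open>\<open>ln\<^sup>- \<bar>z\<bar>\<close>; its value \<open>0\<close> at \<open>z = 0\<close> comes from \<open>ln 0 = 0\<close> and is irrelevant (a null set).\<close>
definition ln_minus :: "'a::real_normed_vector \<Rightarrow> real" where
  "ln_minus z = (if norm z < 1 then - ln (norm z) else 0)"

lemma ln_minus_nonneg: "0 \<le> ln_minus z"
  unfolding ln_minus_def by (cases "z = 0") auto

lemma borel_measurable_ln_minus[measurable]:
  "(ln_minus :: 'a::euclidean_space \<Rightarrow> real) \<in> borel_measurable borel"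
  unfolding ln_minus_def by measurable

lemma ln_minus_le_dyadic_balls:
  "ennreal (ln_minus z) \<le> (\<Sum>k. ennreal (ln 2) * indicator (ball 0 ((1/2)^k)) z)"
proof (cases "z \<noteq> 0 \<and> norm z < 1")
  case False
  then show ?thesis by (auto simp: ln_minus_def)
next
  case True
  then have z0: "0 < norm z" and z1: "norm z < 1" by auto
  have "\<exists>m::nat. (1/2::real)^m \<le> norm z"
    using real_arch_pow_inv[OF z0, of "1/2"] by (auto simp: power_one_over intro: less_imp_le)
  define m where "m = (LEAST m::nat. (1/2::real)^m \<le> norm z)"
  have m: "(1/2::real)^m \<le> norm z"
    unfolding m_def by (rule LeastI_ex) fact
  have below_m: "norm z < (1/2)^k" if "k < m" for k
    using not_less_Least[OF that[unfolded m_def]] by simp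
  have "ln_minus z = - ln (norm z)" unfolding ln_minus_def using z1 by simp
  also have "\<dots> \<le> - ln ((1/2::real)^m)" using m z0 by simp
  also have "\<dots> = real m * ln 2" by (simp add: ln_realpow ln_div)
  finally have "ennreal (ln_minus z) \<le> ennreal (real m * ln 2)" by (simp add: ennreal_leI)
  also have "\<dots> = (\<Sum>k<m. ennreal (ln 2) * indicator (ball 0 ((1/2)^k)) z)"
    by (simp add: below_m indicator_def ennreal_mult' mult.commute ennreal_of_nat_eq_real_of_nat)
  also have "\<dots> \<le> (\<Sum>k. ennreal (ln 2) * indicator (ball 0 ((1/2)^k)) z)"
    by (rule sum_le_suminf) auto
  finally show ?thesis .
qed

lemma integrable_ln_minus: "integrable lborel (ln_minus :: 'a::euclidean_space \<Rightarrow> real)"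
proof (rule integrableI_nonneg)
  show "AE x in lborel. 0 \<le> ln_minus x" by (simp add: ln_minus_nonneg)
  define C where "C = unit_ball_vol (real DIM('a))"
  define r :: real where "r = (1/2)^DIM('a)"
  have "0 \<le> C" unfolding C_def by simp
  have "r < 1" unfolding r_def by (simp add: power_less_one_iff)
  have vol: "emeasure lborel (ball (0::'a) ((1/2)^k)) = ennreal (C * r^k)" for k
    by (simp add: emeasure_ball C_def r_def flip: power_mult) (simp add: mult.commute)
  have "(\<integral>\<^sup>+ x. ennreal (ln_minus (x::'a)) \<partial>lborel) \<le>
        (\<integral>\<^sup>+ x. (\<Sum>k. ennreal (ln 2) * indicator (ball (0::'a) ((1/2)^k)) x) \<partial>lborel)"
    by (rule nn_integral_mono) (rule ln_minus_le_dyadic_balls)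
  also have "\<dots> = (\<Sum>k. \<integral>\<^sup>+ x. ennreal (ln 2) * indicator (ball (0::'a) ((1/2)^k)) x \<partial>lborel)"
    by (intro nn_integral_suminf borel_measurable_times_ennreal borel_measurable_indicator) auto
  also have "\<dots> = (\<Sum>k. ennreal (ln 2 * C * r^k))"
    by (intro suminf_cong) (simp add: nn_integral_cmult_indicator vol ennreal_mult' mult.assoc)
  also have "\<dots> = ennreal (\<Sum>k. ln 2 * C * r^k)"
    using \<open>0 \<le> C\<close> \<open>r < 1\<close> by (intro suminf_ennreal2) (auto simp: r_def intro!: summable_mult summable_geometric)
  also have "\<dots> < \<infinity>" by simp
  finally show "(\<integral>\<^sup>+ x. ennreal (ln_minus (x::'a)) \<partial>lborel) < \<infinity>" .
qed simp

lemma integrable_ln_minus_translate: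
  "integrable lborel (\<lambda>y. ln_minus (x - y :: 'a::euclidean_space))"
  and integral_ln_minus_translate:
  "(\<integral>y. ln_minus (x - y :: 'a::euclidean_space) \<partial>lborel) = (\<integral>z. ln_minus (z::'a) \<partial>lborel)"
proof -
  have reflect: "ln_minus (x - y) = ln_minus (- x + y)" for y
    by (simp add: ln_minus_def norm_minus_commute)
  have "integrable (distr lborel borel ((+) (- x))) ln_minus"
    by (simp add: lborel_distr_plus integrable_ln_minus)
  then show "integrable lborel (\<lambda>y. ln_minus (x - y))"
    by (subst (asm) integrable_distr_eq) (auto simp: reflect)
  have "(\<integral>y. ln_minus (x - y) \<partial>lborel) = (\<integral>y. ln_minus (- x + y) \<partial>lborel)"
    by (simp only: reflect)
  also have "\<dots> = (\<integral>z. ln_minus z \<partial>distr lborel borel ((+) (- x)))"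
    by (subst integral_distr) auto
  finally show "(\<integral>y. ln_minus (x - y) \<partial>lborel) = (\<integral>z. ln_minus (z::'a) \<partial>lborel)"
    by (simp add: lborel_distr_plus)
qed

lemma abs_ln_norm_diff_le:
  fixes x y :: "'a::real_normed_vector"
  shows "\<bar>ln (norm (x - y))\<bar> \<le> ln (2 + norm x) + ln (2 + norm y) + ln_minus (x - y)"
proof (cases "norm (x - y) < 1")
  case True
  then have "\<bar>ln (norm (x - y))\<bar> = ln_minus (x - y)"
    by (cases "x = y") (auto simp: ln_minus_def abs_if)
  then show ?thesis by simp
next
  case False
  have "(2 + norm x) * (2 + norm y) = 4 + 2 * norm x + 2 * norm y + norm x * norm y"
    by (simp add: algebra_simps)
  moreover have "0 \<le> norm x * norm y" by simp
  ultimately have "norm (x - y) \<le> (2 + norm x) * (2 + norm y)"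
    using norm_triangle_ineq4[of x y] norm_ge_zero[of x] norm_ge_zero[of y] by linarith
  then have "ln (norm (x - y)) \<le> ln ((2 + norm x) * (2 + norm y))"
    using False by (intro ln_mono) auto
  also have "\<dots> = ln (2 + norm x) + ln (2 + norm y)"
    by (rule ln_mult_pos) (auto intro: add_pos_nonneg)
  finally show ?thesis using False ln_minus_nonneg[of "x - y"] by simp
qed

text \<open>Bounded by \<open>1\<close> so that the class contains \<open>M_TF K\<close> together with all differences of its
  elements.\<close>
definition bounded_log_moment :: "('a::euclidean_space \<Rightarrow> real) \<Rightarrow> bool" where
  "bounded_log_moment f \<longleftrightarrow> f \<in> borel_measurable lborel \<and> (\<forall>x. \<bar>f x\<bar> \<le> 1) \<and>
     integrable lborel (\<lambda>x. f x * ln (2 + norm x))"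

definition log_potential :: "('a::euclidean_space \<Rightarrow> real) \<Rightarrow> 'a \<Rightarrow> real" where
  "log_potential f x = (\<integral>y. ln (norm (x - y)) * f y \<partial>lborel)"

lemma bounded_log_moment_measurable:
  "bounded_log_moment f \<Longrightarrow> f \<in> borel_measurable lborel"
  by (simp add: bounded_log_moment_def)

lemma bounded_log_moment_le_1: "bounded_log_moment f \<Longrightarrow> \<bar>f x\<bar> \<le> 1"
  by (simp add: bounded_log_moment_def)

lemma bounded_log_moment_integrable_log:
  "bounded_log_moment f \<Longrightarrow> integrable lborel (\<lambda>x. f x * ln (2 + norm x))"
  by (simp add: bounded_log_moment_def)

lemma bounded_log_moment_integrable:
  assumes "bounded_log_moment f" shows "integrable lborel f"
proof (rule Bochner_Integration.integrable_bound)
  show "integrable lborel (\<lambda>x. f x * ln (2 + norm x) / ln 2)"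
    using assms by (simp add: bounded_log_moment_def)
  have "\<bar>f x\<bar> \<le> \<bar>f x\<bar> * (ln (2 + norm x) / ln 2)" for x :: 'a
  proof -
    have "ln 2 \<le> ln (2 + norm x)" by (simp add: add_pos_nonneg)
    then show ?thesis
      using mult_left_mono[of 1 "ln (2 + norm x) / ln 2" "\<bar>f x\<bar>"] by simp
  qed
  then show "AE x in lborel. norm (f x) \<le> norm (f x * ln (2 + norm x) / ln 2)"
    by (simp add: abs_mult)
qed (use bounded_log_moment_measurable[OF assms(1)] in measurable)

lemma bounded_log_moment_abs:
  assumes "bounded_log_moment f" shows "bounded_log_moment (\<lambda>x. \<bar>f x\<bar>)"
proof -
  have "\<bar>f x\<bar> * ln (2 + norm x) = \<bar>f x * ln (2 + norm x)\<bar>" for x :: 'a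
    by (simp add: abs_mult)
  with assms show ?thesis
    unfolding bounded_log_moment_def by (auto intro: integrable_abs)
qed

lemma log_kernel_bound:
  assumes "bounded_log_moment f"
  shows "\<bar>ln (norm (x - y)) * f y\<bar> \<le> ln (2 + norm x) * \<bar>f y\<bar> + \<bar>f y * ln (2 + norm y)\<bar> + ln_minus (x - y)"
proof -
  have "\<bar>ln (norm (x - y)) * f y\<bar> \<le> (ln (2 + norm x) + ln (2 + norm y) + ln_minus (x - y)) * \<bar>f y\<bar>"
    unfolding abs_mult by (intro mult_right_mono abs_ln_norm_diff_le) auto
  also have "\<dots> = ln (2 + norm x) * \<bar>f y\<bar> + \<bar>f y * ln (2 + norm y)\<bar> + ln_minus (x - y) * \<bar>f y\<bar>"
    by (simp add: distrib_right abs_mult)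
  also have "ln_minus (x - y) * \<bar>f y\<bar> \<le> ln_minus (x - y)"
    using bounded_log_moment_le_1[OF assms, of y] ln_minus_nonneg[of "x - y"] by (rule mult_left_le)
  finally show ?thesis by simp
qed

lemma integrable_log_kernel:
  assumes "bounded_log_moment f"
  shows "integrable lborel (\<lambda>y. ln (norm (x - y)) * f y)"
proof (rule Bochner_Integration.integrable_bound)
  show "integrable lborel (\<lambda>y. ln (2 + norm x) * \<bar>f y\<bar> + \<bar>f y * ln (2 + norm y)\<bar> + ln_minus (x - y))"
    using bounded_log_moment_integrable[OF assms] bounded_log_moment_integrable_log[OF assms]
      integrable_ln_minus_translate[of x]
    by (intro Bochner_Integration.integrable_add integrable_mult_right integrable_abs)
  show "AE y in lborel. norm (ln (norm (x - y)) * f y) \<le>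
      norm (ln (2 + norm x) * \<bar>f y\<bar> + \<bar>f y * ln (2 + norm y)\<bar> + ln_minus (x - y))"
    using log_kernel_bound[OF assms, of x] by (intro AE_I2) (smt (verit) real_norm_def)
qed (use bounded_log_moment_measurable[OF assms(1)] in measurable)

lemma integral_abs_log_kernel_le:
  fixes f :: "'a::euclidean_space \<Rightarrow> real"
  assumes "bounded_log_moment f"
  shows "(\<integral>y. \<bar>ln (norm (x - y)) * f y\<bar> \<partial>lborel) \<le>
    ln (2 + norm x) * (\<integral>y. \<bar>f y\<bar> \<partial>lborel)
    + ((\<integral>y. \<bar>f y * ln (2 + norm y)\<bar> \<partial>lborel) + (\<integral>z. ln_minus (z::'a) \<partial>lborel))"
proof -
  have int: "integrable lborel (\<lambda>y. \<bar>f y\<bar>)" "integrable lborel (\<lambda>y. \<bar>f y * ln (2 + norm y)\<bar>)"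
    using bounded_log_moment_integrable[OF assms] bounded_log_moment_integrable_log[OF assms] by auto
  have "(\<integral>y. \<bar>ln (norm (x - y)) * f y\<bar> \<partial>lborel) \<le>
        (\<integral>y. ln (2 + norm x) * \<bar>f y\<bar> + \<bar>f y * ln (2 + norm y)\<bar> + ln_minus (x - y) \<partial>lborel)"
    using int integrable_ln_minus_translate[of x] integrable_log_kernel[OF assms, of x]
    by (intro integral_mono log_kernel_bound[OF assms]) auto
  also have "\<dots> = ln (2 + norm x) * (\<integral>y. \<bar>f y\<bar> \<partial>lborel) + (\<integral>y. \<bar>f y * ln (2 + norm y)\<bar> \<partial>lborel)
      + (\<integral>y. ln_minus (x - y) \<partial>lborel)"
    using int integrable_ln_minus_translate[of x]
    by (simp only: Bochner_Integration.integral_add integral_mult_right_zero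
        Bochner_Integration.integrable_add integrable_mult_right)
  finally show ?thesis by (simp only: integral_ln_minus_translate add.assoc)
qed

lemma abs_log_potential_le:
  fixes f :: "'a::euclidean_space \<Rightarrow> real"
  assumes "bounded_log_moment f"
  shows "\<bar>log_potential f x\<bar> \<le>
    ln (2 + norm x) * (\<integral>y. \<bar>f y\<bar> \<partial>lborel)
    + ((\<integral>y. \<bar>f y * ln (2 + norm y)\<bar> \<partial>lborel) + (\<integral>z. ln_minus (z::'a) \<partial>lborel))"
proof -
  have "\<bar>log_potential f x\<bar> \<le> (\<integral>y. \<bar>ln (norm (x - y)) * f y\<bar> \<partial>lborel)"
    unfolding log_potential_def
    using integral_norm_bound[of lborel "\<lambda>y. ln (norm (x - y)) * f y"] by (simp only: real_norm_def)
  then show ?thesis using integral_abs_log_kernel_le[OF assms, of x] by linarith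
qed

lemma borel_measurable_log_potential:
  assumes "bounded_log_moment f"
  shows "log_potential f \<in> borel_measurable lborel"
    and "(\<lambda>x. \<integral>y. \<bar>ln (norm (x - y)) * f y\<bar> \<partial>lborel) \<in> borel_measurable lborel"
proof -
  have [measurable]: "f \<in> borel_measurable lborel" by (rule bounded_log_moment_measurable[OF assms])
  have "(\<lambda>(x, y). ln (norm (x - y)) * f y) \<in> borel_measurable (lborel \<Otimes>\<^sub>M (lborel :: 'a measure))"
    by measurable
  then show "log_potential f \<in> borel_measurable lborel"
    unfolding log_potential_def[abs_def] by (rule lborel.borel_measurable_lebesgue_integral)
  have "(\<lambda>(x, y). \<bar>ln (norm (x - y)) * f y\<bar>) \<in> borel_measurable (lborel \<Otimes>\<^sub>M (lborel :: 'a measure))"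
    by measurable
  then show "(\<lambda>x. \<integral>y. \<bar>ln (norm (x - y)) * f y\<bar> \<partial>lborel) \<in> borel_measurable lborel"
    by (rule lborel.borel_measurable_lebesgue_integral)
qed

lemma integrable_mult_log_growth:
  assumes g: "bounded_log_moment g" and [measurable]: "h \<in> borel_measurable lborel"
    and h_le: "\<And>x. \<bar>h x\<bar> \<le> ln (2 + norm x) * a + b"
  shows "integrable lborel (\<lambda>x. g x * h x)"
proof (rule Bochner_Integration.integrable_bound)
  show "integrable lborel (\<lambda>x. \<bar>a\<bar> * \<bar>g x * ln (2 + norm x)\<bar> + \<bar>b\<bar> * \<bar>g x\<bar>)"
    using bounded_log_moment_integrable[OF g] bounded_log_moment_integrable_log[OF g]
    by (intro Bochner_Integration.integrable_add integrable_mult_right integrable_abs)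
  have "\<bar>g x * h x\<bar> \<le> \<bar>a\<bar> * \<bar>g x * ln (2 + norm x)\<bar> + \<bar>b\<bar> * \<bar>g x\<bar>" for x
  proof -
    have "0 \<le> ln (2 + norm x)" by simp
    then have "\<bar>h x\<bar> \<le> \<bar>a\<bar> * ln (2 + norm x) + \<bar>b\<bar>"
      using h_le[of x] mult_right_mono[of a "\<bar>a\<bar>" "ln (2 + norm x)"] abs_ge_self[of a] abs_ge_self[of b]
      by (simp add: mult.commute)
    then have "\<bar>g x\<bar> * \<bar>h x\<bar> \<le> \<bar>g x\<bar> * (\<bar>a\<bar> * ln (2 + norm x) + \<bar>b\<bar>)"
      by (intro mult_left_mono) auto
    then show ?thesis by (simp add: abs_mult algebra_simps)
  qed
  then show "AE x in lborel. norm (g x * h x) \<le> norm (\<bar>a\<bar> * \<bar>g x * ln (2 + norm x)\<bar> + \<bar>b\<bar> * \<bar>g x\<bar>)"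
    by (intro AE_I2) simp
qed (use bounded_log_moment_measurable[OF assms(1)] in measurable)

lemma integrable_mult_log_potential:
  assumes "bounded_log_moment f" "bounded_log_moment g"
  shows "integrable lborel (\<lambda>x. g x * log_potential f x)"
  using integrable_mult_log_growth[OF assms(2) borel_measurable_log_potential(1)[OF assms(1)]
    abs_log_potential_le[OF assms(1)]] .

lemma log_potential_symmetric:
  assumes f: "bounded_log_moment f" and g: "bounded_log_moment g"
  shows "(\<integral>x. g x * log_potential f x \<partial>lborel) = (\<integral>y. f y * log_potential g y \<partial>lborel)"
proof -
  have [measurable]: "f \<in> borel_measurable lborel" by (rule bounded_log_moment_measurable[OF f])
  have [measurable]: "g \<in> borel_measurable lborel" by (rule bounded_log_moment_measurable[OF g])
  define h where "h x y = g x * (ln (norm (x - y)) * f y)" for x y :: 'a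
  have "integrable (lborel \<Otimes>\<^sub>M lborel) (case_prod h)"
  proof (rule lborel_pair.Fubini_integrable)
    show "case_prod h \<in> borel_measurable (lborel \<Otimes>\<^sub>M lborel)" unfolding h_def by measurable
    have "integrable lborel (\<lambda>x. \<bar>g x\<bar> * (\<integral>y. \<bar>ln (norm (x - y)) * f y\<bar> \<partial>lborel))"
      using integral_abs_log_kernel_le[OF f]
      by (intro integrable_mult_log_growth[OF bounded_log_moment_abs[OF g]
            borel_measurable_log_potential(2)[OF f]]) auto
    then show "integrable lborel (\<lambda>x. \<integral>y. norm (case_prod h (x, y)) \<partial>lborel)"
      by (simp add: h_def abs_mult mult.assoc)
    show "AE x in lborel. integrable lborel (\<lambda>y. case_prod h (x, y))"
      unfolding h_def using integrable_log_kernel[OF f] by auto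
  qed
  then have "(\<integral>y. (\<integral>x. h x y \<partial>lborel) \<partial>lborel) = (\<integral>x. (\<integral>y. h x y \<partial>lborel) \<partial>lborel)"
    by (rule lborel_pair.Fubini_integral)
  moreover have "(\<integral>y. h x y \<partial>lborel) = g x * log_potential f x" for x
    unfolding h_def log_potential_def by simp
  moreover have "(\<integral>x. h x y \<partial>lborel) = f y * log_potential g y" for y
  proof -
    have "h x y = f y * (ln (norm (y - x)) * g x)" for x
      unfolding h_def by (simp add: norm_minus_commute)
    then show ?thesis unfolding log_potential_def by simp
  qed
  ultimately show ?thesis by simp
qed

section \<open>The Thomas-Fermi functional and its first variation\<close>

lemma M_TF_bounded_log_moment: "\<sigma> \<in> M_TF K \<Longrightarrow> bounded_log_moment \<sigma>"
  unfolding M_TF_def bounded_log_moment_def by auto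

lemma M_TF_diff_bounded_log_moment:
  assumes "\<tau> \<in> M_TF K" "\<sigma> \<in> M_TF K"
  shows "bounded_log_moment (\<lambda>x. \<tau> x - \<sigma> x)"
proof -
  have "(\<tau> x - \<sigma> x) * ln (2 + norm x) = \<tau> x * ln (2 + norm x) - \<sigma> x * ln (2 + norm x)" for x
    by (simp add: algebra_simps)
  moreover have "\<bar>\<tau> x - \<sigma> x\<bar> \<le> 1" for x
  proof -
    have "0 \<le> \<tau> x" "\<tau> x \<le> 1" "0 \<le> \<sigma> x" "\<sigma> x \<le> 1" using assms unfolding M_TF_def by auto
    then show ?thesis by linarith
  qed
  ultimately show ?thesis using assms unfolding M_TF_def bounded_log_moment_def by auto
qed

lemma M_TF_convex:
  assumes \<sigma>: "\<sigma> \<in> M_TF K" and \<tau>: "\<tau> \<in> M_TF K" and u: "0 \<le> u" "u \<le> 1"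
  shows "(\<lambda>x. \<sigma> x + u * (\<tau> x - \<sigma> x)) \<in> M_TF K"
proof -
  have [measurable]: "\<sigma> \<in> borel_measurable lborel" "\<tau> \<in> borel_measurable lborel"
    using \<sigma> \<tau> unfolding M_TF_def by auto
  have \<sigma>01: "0 \<le> \<sigma> x" "\<sigma> x \<le> 1" and \<tau>01: "0 \<le> \<tau> x" "\<tau> x \<le> 1" for x
    using \<sigma> \<tau> unfolding M_TF_def by auto
  have convex_comb: "\<sigma> x + u * (\<tau> x - \<sigma> x) = (1 - u) * \<sigma> x + u * \<tau> x" for x
    by (simp add: algebra_simps)
  have "0 \<le> (1 - u) * \<sigma> x + u * \<tau> x" for x
    using \<sigma>01 \<tau>01 u by simp
  moreover have "(1 - u) * \<sigma> x + u * \<tau> x \<le> 1" for x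
    using convex_bound_le[OF \<sigma>01(2) \<tau>01(2), of "1 - u" u] u by simp
  moreover have "integrable lborel (\<lambda>x. ((1 - u) * \<sigma> x + u * \<tau> x) * ln (2 + norm x))"
  proof -
    have "integrable lborel (\<lambda>x. (1 - u) * (\<sigma> x * ln (2 + norm x)) + u * (\<tau> x * ln (2 + norm x)))"
      using \<sigma> \<tau> unfolding M_TF_def by simp
    then show ?thesis by (simp add: distrib_right mult.assoc)
  qed
  moreover have "(\<integral>x. (1 - u) * \<sigma> x + u * \<tau> x \<partial>lborel) = real K"
  proof -
    have "integrable lborel \<sigma>" "integrable lborel \<tau>"
      using \<sigma> \<tau> by (simp_all add: bounded_log_moment_integrable M_TF_bounded_log_moment)
    then have "(\<integral>x. (1 - u) * \<sigma> x + u * \<tau> x \<partial>lborel) = (1 - u) * real K + u * real K"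
      using \<sigma> \<tau> unfolding M_TF_def by simp
    then show ?thesis by (simp add: algebra_simps)
  qed
  ultimately show ?thesis unfolding M_TF_def convex_comb by auto
qed

lemma integrable_V_nuc_mult:
  assumes "bounded_log_moment f"
  shows "integrable lborel (\<lambda>x. V_nuc K xs x * f x)"
proof -
  have "integrable lborel (\<lambda>x. ln (norm (x - xs i)) * f x)" for i
    using integrable_log_kernel[OF assms, of "xs i"] by (simp add: norm_minus_commute)
  then show ?thesis unfolding V_nuc_def by (simp add: sum_distrib_right)
qed

lemma E_TF_eq_log_potential:
  "E_TF K xs f = - (\<integral>x. V_nuc K xs x * f x \<partial>lborel) - 1/2 * (\<integral>x. f x * log_potential f x \<partial>lborel)"
proof -
  have "(\<integral>y. f x * ln (norm (x - y)) * f y \<partial>lborel) = f x * log_potential f x" for x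
    unfolding log_potential_def by (simp add: mult.assoc)
  then show ?thesis unfolding E_TF_def D_TF_def by simp
qed

lemma Phi_TF_eq_log_potential: "Phi_TF K xs f x = V_nuc K xs x + log_potential f x"
  unfolding Phi_TF_def log_potential_def by (simp add: mult.commute)

lemma log_potential_add_scaled:
  assumes "bounded_log_moment f" "bounded_log_moment g"
  shows "log_potential (\<lambda>y. f y + u * g y) x = log_potential f x + u * log_potential g x"
proof -
  have "ln (norm (x - y)) * (f y + u * g y) = ln (norm (x - y)) * f y + u * (ln (norm (x - y)) * g y)" for y
    by (simp add: algebra_simps)
  then show ?thesis
    unfolding log_potential_def
    using integrable_log_kernel[OF assms(1), of x] integrable_log_kernel[OF assms(2), of x] by simp
qed

lemma E_TF_add_scaled:
  fixes f g :: "real^2 \<Rightarrow> real"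
  assumes f: "bounded_log_moment f" and g: "bounded_log_moment g"
  shows "E_TF K xs (\<lambda>x. f x + u * g x) = E_TF K xs f - u * (\<integral>x. Phi_TF K xs f x * g x \<partial>lborel)
           - u\<^sup>2 / 2 * (\<integral>x. g x * log_potential g x \<partial>lborel)"
proof -
  define V where "V = V_nuc K xs"
  note int = integrable_V_nuc_mult[OF f, of K xs, folded V_def] integrable_V_nuc_mult[OF g, of K xs, folded V_def]
    integrable_mult_log_potential[OF f f] integrable_mult_log_potential[OF f g]
    integrable_mult_log_potential[OF g f] integrable_mult_log_potential[OF g g]
  have "V x * (f x + u * g x) = V x * f x + u * (V x * g x)" for x
    by (simp add: algebra_simps)
  then have potential_energy: "(\<integral>x. V x * (f x + u * g x) \<partial>lborel)
      = (\<integral>x. V x * f x \<partial>lborel) + u * (\<integral>x. V x * g x \<partial>lborel)"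
    using int by simp
  have "(f x + u * g x) * log_potential (\<lambda>y. f y + u * g y) x
      = f x * log_potential f x + u * (f x * log_potential g x) + u * (g x * log_potential f x)
        + u\<^sup>2 * (g x * log_potential g x)" for x
    unfolding log_potential_add_scaled[OF f g] by (simp add: algebra_simps power2_eq_square)
  then have interaction_energy: "(\<integral>x. (f x + u * g x) * log_potential (\<lambda>y. f y + u * g y) x \<partial>lborel)
      = (\<integral>x. f x * log_potential f x \<partial>lborel) + u * (\<integral>x. f x * log_potential g x \<partial>lborel)
        + u * (\<integral>x. g x * log_potential f x \<partial>lborel) + u\<^sup>2 * (\<integral>x. g x * log_potential g x \<partial>lborel)"
    using int by simp
  have "Phi_TF K xs f x * g x = V x * g x + g x * log_potential f x" for x
    unfolding Phi_TF_eq_log_potential V_def by (simp add: algebra_simps)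
  then have "(\<integral>x. Phi_TF K xs f x * g x \<partial>lborel)
      = (\<integral>x. V x * g x \<partial>lborel) + (\<integral>x. g x * log_potential f x \<partial>lborel)"
    using int by simp
  then show ?thesis
    using potential_energy interaction_energy log_potential_symmetric[OF g f]
    unfolding E_TF_eq_log_potential V_def[symmetric]
    by (simp add: algebra_simps)
qed

lemma nonpos_if_le_quadratic:
  fixes a b :: real
  assumes "\<And>u. 0 < u \<Longrightarrow> u \<le> 1 \<Longrightarrow> u * a \<le> u\<^sup>2 * b"
  shows "a \<le> 0"
proof (rule ccontr)
  assume "\<not> a \<le> 0"
  define u where "u = min 1 (a / (\<bar>b\<bar> + 1))"
  have u: "0 < u" "u \<le> 1" using \<open>\<not> a \<le> 0\<close> by (auto simp: u_def)
  have "u * \<bar>b\<bar> \<le> a / (\<bar>b\<bar> + 1) * \<bar>b\<bar>"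
    by (intro mult_right_mono) (auto simp: u_def)
  also have "\<dots> < a" using \<open>\<not> a \<le> 0\<close> by (simp add: field_simps)
  finally have "u * b < a"
    using mult_left_mono[OF abs_ge_self[of b], of u] u by linarith
  then have "u\<^sup>2 * b < u * a"
    using u by (simp add: power2_eq_square mult.assoc)
  with assms[OF u] show False by simp
qed

lemma first_variation_nonpos:
  assumes \<sigma>: "\<sigma> \<in> M_TF K" and \<tau>: "\<tau> \<in> M_TF K"
    and min: "\<forall>\<rho> \<in> M_TF K. E_TF K xs \<sigma> \<le> E_TF K xs \<rho>"
  shows "(\<integral>x. Phi_TF K xs \<sigma> x * (\<tau> x - \<sigma> x) \<partial>lborel) \<le> 0"
proof (rule nonpos_if_le_quadratic)
  fix u :: real
  assume "0 < u" "u \<le> 1"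
  then have "E_TF K xs \<sigma> \<le> E_TF K xs (\<lambda>x. \<sigma> x + u * (\<tau> x - \<sigma> x))"
    using min M_TF_convex[OF \<sigma> \<tau>] by simp
  then show "u * (\<integral>x. Phi_TF K xs \<sigma> x * (\<tau> x - \<sigma> x) \<partial>lborel)
      \<le> u\<^sup>2 * (- (\<integral>x. (\<tau> x - \<sigma> x) * log_potential (\<lambda>y. \<tau> y - \<sigma> y) x \<partial>lborel) / 2)"
    unfolding E_TF_add_scaled[OF M_TF_bounded_log_moment[OF \<sigma>] M_TF_diff_bounded_log_moment[OF \<tau> \<sigma>]]
    by simp
qed

section \<open>Transferring mass between level sets of the potential\<close>

lemma integrable_indicator_mult_bounded:
  fixes f :: "'a \<Rightarrow> real"
  assumes "A \<in> sets M" "emeasure M A < \<infinity>" "f \<in> borel_measurable M"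
    and "\<And>x. x \<in> A \<Longrightarrow> \<bar>f x\<bar> \<le> c"
  shows "integrable M (\<lambda>x. indicator A x * f x)"
proof (rule Bochner_Integration.integrable_bound)
  show "integrable M (\<lambda>x. c * indicator A x :: real)" using assms(1,2) by simp
  show "AE x in M. norm (indicator A x * f x) \<le> norm (c * indicator A x :: real)"
    using assms(4) by (intro AE_I2) (auto simp: indicator_def intro: order_trans[OF _ abs_ge_self])
qed (use assms in auto)

lemma measure_mult_le_integral_indicator_mult:
  fixes f :: "'a \<Rightarrow> real"
  assumes "A \<in> sets M" "emeasure M A < \<infinity>" "f \<in> borel_measurable M"
    and "\<And>x. x \<in> A \<Longrightarrow> \<bar>f x\<bar> \<le> c" and "\<And>x. x \<in> A \<Longrightarrow> q \<le> f x"
  shows "q * measure M A \<le> (\<integral>x. indicator A x * f x \<partial>M)"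
proof -
  have "integrable M (\<lambda>x. q * indicator A x :: real)" using assms(1,2) by simp
  then have "(\<integral>x. q * indicator A x \<partial>M) \<le> (\<integral>x. indicator A x * f x \<partial>M)"
    using assms(5) integrable_indicator_mult_bounded[OF assms(1-4)]
    by (intro integral_mono) (auto simp: indicator_def)
  then show ?thesis using assms(1) by (simp add: Int_absorb1 sets.sets_into_space)
qed

lemma integral_indicator_mult_le_measure_mult:
  fixes f :: "'a \<Rightarrow> real"
  assumes "A \<in> sets M" "emeasure M A < \<infinity>" "f \<in> borel_measurable M"
    and "\<And>x. x \<in> A \<Longrightarrow> \<bar>f x\<bar> \<le> c" and "\<And>x. x \<in> A \<Longrightarrow> f x \<le> p"
  shows "(\<integral>x. indicator A x * f x \<partial>M) \<le> p * measure M A"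
proof -
  have "- p * measure M A \<le> (\<integral>x. indicator A x * - f x \<partial>M)"
    using assms by (intro measure_mult_le_integral_indicator_mult[where c = c]) auto
  then show ?thesis by simp
qed

lemma integrable_indicator_mult_log_weight:
  fixes S :: "'a::euclidean_space set"
  assumes "S \<in> sets lborel" "bounded S"
  shows "integrable lborel (\<lambda>x. indicator S x * ln (2 + norm x))"
proof -
  obtain r where r: "\<And>x. x \<in> S \<Longrightarrow> norm x \<le> r" using \<open>bounded S\<close> by (auto simp: bounded_iff)
  have "\<bar>ln (2 + norm x)\<bar> \<le> ln (2 + r)" if "x \<in> S" for x
  proof -
    have "0 < 2 + norm x" "2 + norm x \<le> 2 + r"
      using r[OF that] norm_ge_zero[of x] by linarith+
    then show ?thesis by simp
  qed
  then show ?thesis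
    using assms emeasure_bounded_finite[OF assms(2)] by (intro integrable_indicator_mult_bounded) auto
qed

lemma M_TF_mass_transfer:
  assumes \<sigma>: "\<sigma> \<in> M_TF K"
    and A: "A \<in> sets lborel" "bounded A" and B: "B \<in> sets lborel" "bounded B" and "A \<inter> B = {}"
    and "0 \<le> a" "0 \<le> b" "\<And>x. x \<in> A \<Longrightarrow> \<sigma> x + a \<le> 1" "\<And>x. x \<in> B \<Longrightarrow> b \<le> \<sigma> x"
    and balance: "a * measure lborel A = b * measure lborel B"
  shows "(\<lambda>x. \<sigma> x + a * indicator A x - b * indicator B x) \<in> M_TF K"
proof -
  have [measurable]: "\<sigma> \<in> borel_measurable lborel" "A \<in> sets borel" "B \<in> sets borel"
    using \<sigma> A B unfolding M_TF_def by auto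
  have "0 \<le> \<sigma> x + a * indicator A x - b * indicator B x \<and> \<sigma> x + a * indicator A x - b * indicator B x \<le> 1" for x
  proof -
    have "0 \<le> \<sigma> x" "\<sigma> x \<le> 1" using \<sigma> unfolding M_TF_def by auto
    then show ?thesis using assms \<open>A \<inter> B = {}\<close> by (auto simp: indicator_def)
  qed
  moreover have "integrable lborel (\<lambda>x. (\<sigma> x + a * indicator A x - b * indicator B x) * ln (2 + norm x))"
  proof -
    have "integrable lborel (\<lambda>x. \<sigma> x * ln (2 + norm x) + a * (indicator A x * ln (2 + norm x))
        - b * (indicator B x * ln (2 + norm x)))"
      using \<sigma> integrable_indicator_mult_log_weight[OF A] integrable_indicator_mult_log_weight[OF B]
      unfolding M_TF_def
      by (intro Bochner_Integration.integrable_diff Bochner_Integration.integrable_add integrable_mult_right) auto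
    then show ?thesis by (simp add: algebra_simps)
  qed
  moreover have "(\<integral>x. \<sigma> x + a * indicator A x - b * indicator B x \<partial>lborel) = real K"
    using \<sigma> emeasure_bounded_finite[OF A(2)] emeasure_bounded_finite[OF B(2)] balance A B
      bounded_log_moment_integrable[OF M_TF_bounded_log_moment[OF \<sigma>]]
    unfolding M_TF_def by simp
  ultimately show ?thesis using \<sigma> unfolding M_TF_def by auto
qed

lemma bounded_subset_positive_measure:
  fixes g h :: "'a::euclidean_space \<Rightarrow> real"
  assumes S: "S \<in> sets lborel" "emeasure lborel S \<noteq> 0" and g_pos: "\<And>x. x \<in> S \<Longrightarrow> 0 < g x"
    and [measurable]: "g \<in> borel_measurable lborel" "h \<in> borel_measurable lborel"
  obtains T \<epsilon> r where "T \<in> sets lborel" "T \<subseteq> S" "bounded T" "emeasure lborel T \<noteq> 0" "0 < \<epsilon>"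
    "\<And>x. x \<in> T \<Longrightarrow> \<epsilon> \<le> g x \<and> \<bar>h x\<bar> \<le> r"
proof -
  have [measurable]: "S \<in> sets borel" using S by simp
  define T where "T n = {x \<in> S. 1 / Suc n \<le> g x \<and> norm x \<le> n \<and> \<bar>h x\<bar> \<le> n}" for n :: nat
  have T_sets: "T n \<in> sets lborel" for n unfolding T_def by measurable
  have "S \<subseteq> (\<Union>n. T n)"
  proof
    fix x assume "x \<in> S"
    obtain m :: nat where "inverse (Suc m) < g x" using reals_Archimedean g_pos[OF \<open>x \<in> S\<close>] by blast
    obtain n :: nat where "norm x + \<bar>h x\<bar> + m \<le> n" using real_arch_simple by blast
    then have "real m \<le> real n" "norm x \<le> n" "\<bar>h x\<bar> \<le> n"
      using norm_ge_zero[of x] abs_ge_zero[of "h x"] by linarith+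
    moreover from this(1) have "1 / Suc n \<le> inverse (Suc m)" by (simp add: field_simps)
    ultimately have "x \<in> T n"
      using \<open>x \<in> S\<close> \<open>inverse (Suc m) < g x\<close> unfolding T_def by auto
    then show "x \<in> (\<Union>n. T n)" by blast
  qed
  then have "emeasure lborel S \<le> emeasure lborel (\<Union>n. T n)"
    using T_sets by (intro emeasure_mono) auto
  moreover have "emeasure lborel (\<Union>n. T n) = 0" if "\<And>n. emeasure lborel (T n) = 0"
    using that T_sets by (intro emeasure_UN_eq_0) auto
  ultimately have "\<exists>n. emeasure lborel (T n) \<noteq> 0"
    using S(2) by force
  then obtain n where "emeasure lborel (T n) \<noteq> 0" by blast
  moreover have "bounded (T n)" by (rule boundedI[of _ n]) (auto simp: T_def)
  ultimately show thesis
    by (intro that[of "T n" "1 / Suc n" n]) (auto simp: T_sets T_def)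
qed

lemma borel_measurable_Phi_TF:
  assumes "bounded_log_moment f"
  shows "Phi_TF K xs f \<in> borel_measurable lborel"
proof -
  have [measurable]: "log_potential f \<in> borel_measurable lborel"
    by (rule borel_measurable_log_potential(1)[OF assms])
  have "V_nuc K xs \<in> borel_measurable lborel" unfolding V_nuc_def by measurable
  then show ?thesis unfolding Phi_TF_eq_log_potential[abs_def] by measurable
qed

lemma integral_Phi_TF_transfer_le:
  assumes \<sigma>: "\<sigma> \<in> M_TF K" and min: "\<forall>\<rho> \<in> M_TF K. E_TF K xs \<sigma> \<le> E_TF K xs \<rho>"
    and A: "A \<in> sets lborel" "bounded A" and B: "B \<in> sets lborel" "bounded B" and "A \<inter> B = {}"
    and "0 \<le> a" "0 \<le> b" "\<And>x. x \<in> A \<Longrightarrow> \<sigma> x + a \<le> 1" "\<And>x. x \<in> B \<Longrightarrow> b \<le> \<sigma> x"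
    and "a * measure lborel A = b * measure lborel B"
    and Phi_bounded: "\<And>x. x \<in> A \<union> B \<Longrightarrow> \<bar>Phi_TF K xs \<sigma> x\<bar> \<le> r"
  shows "a * (\<integral>x. indicator A x * Phi_TF K xs \<sigma> x \<partial>lborel) \<le> b * (\<integral>x. indicator B x * Phi_TF K xs \<sigma> x \<partial>lborel)"
proof -
  define \<Phi> where "\<Phi> = Phi_TF K xs \<sigma>"
  have \<Phi>_measurable: "\<Phi> \<in> borel_measurable lborel"
    unfolding \<Phi>_def by (rule borel_measurable_Phi_TF[OF M_TF_bounded_log_moment[OF \<sigma>]])
  have "integrable lborel (\<lambda>x. indicator A x * \<Phi> x)"
    using Phi_bounded by (intro integrable_indicator_mult_bounded[OF A(1) emeasure_bounded_finite[OF A(2)]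
        \<Phi>_measurable, where c = r]) (simp add: \<Phi>_def)
  moreover have "integrable lborel (\<lambda>x. indicator B x * \<Phi> x)"
    using Phi_bounded by (intro integrable_indicator_mult_bounded[OF B(1) emeasure_bounded_finite[OF B(2)]
        \<Phi>_measurable, where c = r]) (simp add: \<Phi>_def)
  moreover have "(\<lambda>x. \<sigma> x + a * indicator A x - b * indicator B x) \<in> M_TF K"
    using assms by (intro M_TF_mass_transfer) auto
  then have "(\<integral>x. \<Phi> x * ((\<sigma> x + a * indicator A x - b * indicator B x) - \<sigma> x) \<partial>lborel) \<le> 0"
    unfolding \<Phi>_def by (rule first_variation_nonpos[OF \<sigma> _ min])
  then have "(\<integral>x. a * (indicator A x * \<Phi> x) - b * (indicator B x * \<Phi> x) \<partial>lborel) \<le> 0"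
    by (simp add: algebra_simps)
  ultimately show ?thesis by (simp add: \<Phi>_def)
qed

lemma Phi_TF_transfer_levels_le:
  assumes \<sigma>: "\<sigma> \<in> M_TF K" and min: "\<forall>\<rho> \<in> M_TF K. E_TF K xs \<sigma> \<le> E_TF K xs \<rho>"
    and A: "A \<in> sets lborel" "bounded A" "0 < measure lborel A"
    and B: "B \<in> sets lborel" "bounded B" and "A \<inter> B = {}"
    and "0 < a" "0 \<le> b" "\<And>x. x \<in> A \<Longrightarrow> \<sigma> x + a \<le> 1" "\<And>x. x \<in> B \<Longrightarrow> b \<le> \<sigma> x"
    and balance: "a * measure lborel A = b * measure lborel B"
    and Phi_bounded: "\<And>x. x \<in> A \<union> B \<Longrightarrow> \<bar>Phi_TF K xs \<sigma> x\<bar> \<le> r"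
    and level_A: "\<And>x. x \<in> A \<Longrightarrow> q \<le> Phi_TF K xs \<sigma> x"
    and level_B: "\<And>x. x \<in> B \<Longrightarrow> Phi_TF K xs \<sigma> x \<le> p"
  shows "q \<le> p"
proof -
  have \<Phi>_measurable: "Phi_TF K xs \<sigma> \<in> borel_measurable lborel"
    by (rule borel_measurable_Phi_TF[OF M_TF_bounded_log_moment[OF \<sigma>]])
  have "a * (q * measure lborel A) \<le> a * (\<integral>x. indicator A x * Phi_TF K xs \<sigma> x \<partial>lborel)"
    using \<open>0 < a\<close> Phi_bounded level_A
    by (intro mult_left_mono measure_mult_le_integral_indicator_mult[OF A(1)
        emeasure_bounded_finite[OF A(2)] \<Phi>_measurable, where c = r]) auto
  also have "\<dots> \<le> b * (\<integral>x. indicator B x * Phi_TF K xs \<sigma> x \<partial>lborel)"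
    by (rule integral_Phi_TF_transfer_le[where r = r]) (use assms in auto)
  also have "\<dots> \<le> b * (p * measure lborel B)"
    using \<open>0 \<le> b\<close> Phi_bounded level_B
    by (intro mult_left_mono integral_indicator_mult_le_measure_mult[OF B(1)
        emeasure_bounded_finite[OF B(2)] \<Phi>_measurable, where c = r]) auto
  finally have "a * measure lborel A * q \<le> b * measure lborel B * p"
    by (simp add: ac_simps)
  then have "a * measure lborel A * q \<le> a * measure lborel A * p"
    unfolding balance .
  with \<open>0 < a\<close> A(3) show ?thesis by simp
qed

lemma balanced_weights:
  fixes m n \<epsilon> :: real
  assumes "0 < m" "0 < n" "0 < \<epsilon>"
  obtains a b where "0 < a" "a \<le> \<epsilon>" "0 < b" "b \<le> \<epsilon>" "a * m = b * n"
proof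
  show "\<epsilon> * (n / (m + n)) \<le> \<epsilon>" by (rule mult_left_le) (use assms in simp_all)
  show "\<epsilon> * (m / (m + n)) \<le> \<epsilon>" by (rule mult_left_le) (use assms in simp_all)
qed (use assms in simp_all)

lemma Phi_TF_level_dichotomy:
  assumes \<sigma>: "\<sigma> \<in> M_TF K" and min: "\<forall>\<rho> \<in> M_TF K. E_TF K xs \<sigma> \<le> E_TF K xs \<rho>" and "p < q"
  shows "(AE x in lborel. \<sigma> x < 1 \<longrightarrow> Phi_TF K xs \<sigma> x \<le> q) \<or>
         (AE x in lborel. 0 < \<sigma> x \<longrightarrow> p \<le> Phi_TF K xs \<sigma> x)"
proof (rule ccontr)
  define \<Phi> where "\<Phi> = Phi_TF K xs \<sigma>"
  have [measurable]: "\<sigma> \<in> borel_measurable lborel"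
    using \<sigma> by (simp add: M_TF_def)
  have [measurable]: "\<Phi> \<in> borel_measurable lborel"
    unfolding \<Phi>_def by (rule borel_measurable_Phi_TF[OF M_TF_bounded_log_moment[OF \<sigma>]])
  let ?above = "{x \<in> space lborel. \<not> (\<sigma> x < 1 \<longrightarrow> \<Phi> x \<le> q)}"
  let ?below = "{x \<in> space lborel. \<not> (0 < \<sigma> x \<longrightarrow> p \<le> \<Phi> x)}"
  have above_sets: "?above \<in> sets lborel" by measurable
  have below_sets: "?below \<in> sets lborel" by measurable
  assume "\<not> ?thesis"
  then have "\<not> (AE x in lborel. \<sigma> x < 1 \<longrightarrow> \<Phi> x \<le> q)" "\<not> (AE x in lborel. 0 < \<sigma> x \<longrightarrow> p \<le> \<Phi> x)"
    unfolding \<Phi>_def by blast+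
  then have "emeasure lborel ?above \<noteq> 0" "emeasure lborel ?below \<noteq> 0"
    unfolding AE_iff_measurable[OF above_sets refl] AE_iff_measurable[OF below_sets refl] .
  obtain A \<epsilon>\<^sub>A r\<^sub>A where A: "A \<in> sets lborel" "A \<subseteq> ?above" "bounded A" "emeasure lborel A \<noteq> 0" "0 < \<epsilon>\<^sub>A"
      and A_bounds: "\<And>x. x \<in> A \<Longrightarrow> \<epsilon>\<^sub>A \<le> 1 - \<sigma> x \<and> \<bar>\<Phi> x\<bar> \<le> r\<^sub>A"
    by (rule bounded_subset_positive_measure[OF above_sets \<open>emeasure lborel ?above \<noteq> 0\<close>, of "\<lambda>x. 1 - \<sigma> x" \<Phi>])
      auto
  obtain B \<epsilon>\<^sub>B r\<^sub>B where B: "B \<in> sets lborel" "B \<subseteq> ?below" "bounded B" "emeasure lborel B \<noteq> 0" "0 < \<epsilon>\<^sub>B"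
      and B_bounds: "\<And>x. x \<in> B \<Longrightarrow> \<epsilon>\<^sub>B \<le> \<sigma> x \<and> \<bar>\<Phi> x\<bar> \<le> r\<^sub>B"
    by (rule bounded_subset_positive_measure[OF below_sets \<open>emeasure lborel ?below \<noteq> 0\<close>, of \<sigma> \<Phi>]) auto
  have "0 < measure lborel A" "0 < measure lborel B"
    using A B emeasure_bounded_finite[OF A(3)] emeasure_bounded_finite[OF B(3)]
    by (auto simp: zero_less_measure_iff emeasure_eq_ennreal_measure)
  moreover have "0 < min \<epsilon>\<^sub>A \<epsilon>\<^sub>B" using A(5) B(5) by simp
  ultimately obtain a b where "0 < a" "a \<le> min \<epsilon>\<^sub>A \<epsilon>\<^sub>B" "0 < b" "b \<le> min \<epsilon>\<^sub>A \<epsilon>\<^sub>B"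
      "a * measure lborel A = b * measure lborel B"
    by (rule balanced_weights)
  have "q \<le> p"
  proof (rule Phi_TF_transfer_levels_le[OF \<sigma> min A(1,3) \<open>0 < measure lborel A\<close> B(1,3) _
        \<open>0 < a\<close> less_imp_le[OF \<open>0 < b\<close>] _ _ \<open>a * measure lborel A = b * measure lborel B\<close>])
    show "A \<inter> B = {}" using A(2) B(2) \<open>p < q\<close> by fastforce
    show "\<sigma> x + a \<le> 1" if "x \<in> A" for x using A_bounds[OF that] \<open>a \<le> min \<epsilon>\<^sub>A \<epsilon>\<^sub>B\<close> by simp
    show "b \<le> \<sigma> x" if "x \<in> B" for x using B_bounds[OF that] \<open>b \<le> min \<epsilon>\<^sub>A \<epsilon>\<^sub>B\<close> by simp
    show "\<bar>Phi_TF K xs \<sigma> x\<bar> \<le> max r\<^sub>A r\<^sub>B" if "x \<in> A \<union> B" for x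
      using that A_bounds B_bounds by (fastforce simp: \<Phi>_def)
    show "q \<le> Phi_TF K xs \<sigma> x" if "x \<in> A" for x using that A(2) by (auto simp: \<Phi>_def)
    show "Phi_TF K xs \<sigma> x \<le> p" if "x \<in> B" for x using that B(2) by (auto simp: \<Phi>_def)
  qed
  with \<open>p < q\<close> show False by simp
qed

section \<open>The Lagrange multiplier\<close>

lemma AE_le_if_AE_le_above:
  fixes f :: "'a \<Rightarrow> real"
  assumes "\<And>q. s < q \<Longrightarrow> AE x in M. P x \<longrightarrow> f x \<le> q"
  shows "AE x in M. P x \<longrightarrow> f x \<le> s"
proof -
  have "AE x in M. \<forall>n. P x \<longrightarrow> f x \<le> s + inverse (Suc n)"
    by (subst AE_all_countable) (auto intro: assms)
  then show ?thesis
  proof (rule eventually_mono, intro impI)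
    fix x assume bound: "\<forall>n. P x \<longrightarrow> f x \<le> s + inverse (Suc n)" and "P x"
    show "f x \<le> s"
    proof (rule ccontr)
      assume "\<not> f x \<le> s"
      then have "0 < f x - s" by linarith
      then obtain n where "inverse (Suc n) < f x - s" using reals_Archimedean by blast
      moreover have "f x \<le> s + inverse (Suc n)" using bound \<open>P x\<close> by blast
      ultimately show False by linarith
    qed
  qed
qed

lemma AE_not_if_AE_le_all:
  fixes f :: "'a \<Rightarrow> real"
  assumes "\<And>q. AE x in M. P x \<longrightarrow> f x \<le> q"
  shows "AE x in M. \<not> P x"
proof -
  have "AE x in M. \<forall>n::nat. P x \<longrightarrow> f x \<le> - real n"
    by (subst AE_all_countable) (auto intro: assms)
  then show ?thesis
  proof (rule eventually_mono)
    fix x assume bound: "\<forall>n::nat. P x \<longrightarrow> f x \<le> - real n"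
    obtain n :: nat where "- f x < real n" using reals_Archimedean2 by blast
    show "\<not> P x"
    proof
      assume "P x"
      with bound have "f x \<le> - real n" by blast
      with \<open>- f x < real n\<close> show False by linarith
    qed
  qed
qed

lemma AE_threshold_exists:
  fixes f :: "'a \<Rightarrow> real"
  assumes dichotomy: "\<And>p q. p < q \<Longrightarrow> (AE x in M. P x \<longrightarrow> f x \<le> q) \<or> (AE x in M. Q x \<longrightarrow> p \<le> f x)"
    and "\<not> (AE x in M. \<not> P x)" and "\<not> (AE x in M. \<not> Q x)"
  shows "\<exists>c. (AE x in M. P x \<longrightarrow> f x \<le> c) \<and> (AE x in M. Q x \<longrightarrow> c \<le> f x)"
proof -
  define U where "U = {q. AE x in M. P x \<longrightarrow> f x \<le> q}"
  have U_up: "q' \<in> U" if "q \<in> U" "q \<le> q'" for q q'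
  proof -
    from \<open>q \<in> U\<close> have "AE x in M. P x \<longrightarrow> f x \<le> q" by (simp add: U_def)
    then have "AE x in M. P x \<longrightarrow> f x \<le> q'" by (rule eventually_mono) (use \<open>q \<le> q'\<close> in auto)
    then show ?thesis by (simp add: U_def)
  qed
  have "U \<noteq> {}"
  proof
    assume "U = {}"
    then have lower: "AE x in M. Q x \<longrightarrow> p \<le> f x" for p
      using dichotomy[of p "p + 1"] by (auto simp: U_def)
    have "AE x in M. Q x \<longrightarrow> - f x \<le> q" for q
      using lower[of "- q"] by (rule eventually_mono) auto
    then show False using AE_not_if_AE_le_all[where M = M and P = Q and f = "\<lambda>x. - f x"] \<open>\<not> (AE x in M. \<not> Q x)\<close> by simp
  qed
  obtain q\<^sub>0 where "q\<^sub>0 \<notin> U"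
    using AE_not_if_AE_le_all[where M = M and P = P and f = f] \<open>\<not> (AE x in M. \<not> P x)\<close> by (auto simp: U_def)
  have "q\<^sub>0 \<le> u" if "u \<in> U" for u
  proof (rule ccontr)
    assume "\<not> q\<^sub>0 \<le> u"
    then show False using U_up[OF that] \<open>q\<^sub>0 \<notin> U\<close> by simp
  qed
  then have "bdd_below U" by (rule bdd_belowI)
  define c where "c = Inf U"
  have "AE x in M. P x \<longrightarrow> f x \<le> c"
  proof (rule AE_le_if_AE_le_above)
    fix q assume "c < q"
    then obtain u where "u \<in> U" "u < q" using cInf_lessD[OF \<open>U \<noteq> {}\<close>] by (auto simp: c_def)
    then show "AE x in M. P x \<longrightarrow> f x \<le> q" using U_up[of u q] by (simp add: U_def)
  qed
  moreover have "AE x in M. Q x \<longrightarrow> - f x \<le> - c"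
  proof (rule AE_le_if_AE_le_above)
    fix q assume "- c < q"
    then have "(- q + c) / 2 < c" by simp
    have "(- q + c) / 2 \<notin> U"
    proof
      assume "(- q + c) / 2 \<in> U"
      then have "c \<le> (- q + c) / 2" unfolding c_def by (rule cInf_lower[OF _ \<open>bdd_below U\<close>])
      with \<open>(- q + c) / 2 < c\<close> show False by simp
    qed
    then have "AE x in M. Q x \<longrightarrow> - q \<le> f x"
      using dichotomy[of "- q" "(- q + c) / 2"] \<open>- c < q\<close> by (auto simp: U_def)
    then show "AE x in M. Q x \<longrightarrow> - f x \<le> q" by (rule eventually_mono) auto
  qed
  then have "AE x in M. Q x \<longrightarrow> c \<le> f x" by (rule eventually_mono) auto
  ultimately show ?thesis by blast
qed

lemma M_TF_not_AE_ge_1: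
  assumes "\<sigma> \<in> M_TF K"
  shows "\<not> (AE x in lborel. \<not> \<sigma> x < 1)"
proof
  assume "AE x in lborel. \<not> \<sigma> x < 1"
  then have "AE x in lborel. ennreal (norm (\<sigma> x)) = 1"
    by (rule eventually_mono) (use assms in \<open>simp add: M_TF_def not_less order.antisym\<close>)
  then have "(\<integral>\<^sup>+ x. ennreal (norm (\<sigma> x)) \<partial>lborel) = (\<integral>\<^sup>+ x. 1 \<partial>(lborel :: (real^2) measure))"
    by (rule nn_integral_cong_AE)
  also have "\<dots> = \<infinity>" by simp
  finally show False
    using bounded_log_moment_integrable[OF M_TF_bounded_log_moment[OF assms]]
    by (simp add: integrable_iff_bounded)
qed

lemma M_TF_not_AE_le_0:
  assumes "K \<ge> 1" "\<sigma> \<in> M_TF K"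
  shows "\<not> (AE x in lborel. \<not> 0 < \<sigma> x)"
proof
  assume "AE x in lborel. \<not> 0 < \<sigma> x"
  then have "AE x in lborel. \<sigma> x = 0"
    by (rule eventually_mono) (use assms(2) in \<open>simp add: M_TF_def not_less order.antisym\<close>)
  then have "(\<integral>x. \<sigma> x \<partial>lborel) = 0" by (rule integral_eq_zero_AE)
  with assms show False by (simp add: M_TF_def)
qed

theorem lemma3p6:
  fixes K :: nat and xs :: "nat \<Rightarrow> real^2" and \<sigma> :: "real^2 \<Rightarrow> real"
  assumes "K \<ge> 1"
    and "\<sigma> \<in> M_TF K"
    and "\<forall>\<tau> \<in> M_TF K. E_TF K xs \<sigma> \<le> E_TF K xs \<tau>"
  shows "\<exists>lam::real. AE x in lborel.
           (\<sigma> x = 1 \<longrightarrow> Phi_TF K xs \<sigma> x \<ge> lam) \<and>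
           (0 < \<sigma> x \<and> \<sigma> x < 1 \<longrightarrow> Phi_TF K xs \<sigma> x = lam) \<and>
           (\<sigma> x = 0 \<longrightarrow> Phi_TF K xs \<sigma> x \<le> lam)"
proof -
  obtain lam where
    "AE x in lborel. \<sigma> x < 1 \<longrightarrow> Phi_TF K xs \<sigma> x \<le> lam"
    "AE x in lborel. 0 < \<sigma> x \<longrightarrow> lam \<le> Phi_TF K xs \<sigma> x"
    using AE_threshold_exists[OF Phi_TF_level_dichotomy[OF assms(2,3)]
        M_TF_not_AE_ge_1[OF assms(2)] M_TF_not_AE_le_0[OF assms(1,2)]]
    by blast
  then have "AE x in lborel. (\<sigma> x = 1 \<longrightarrow> Phi_TF K xs \<sigma> x \<ge> lam) \<and>
      (0 < \<sigma> x \<and> \<sigma> x < 1 \<longrightarrow> Phi_TF K xs \<sigma> x = lam) \<and> (\<sigma> x = 0 \<longrightarrow> Phi_TF K xs \<sigma> x \<le> lam)"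
    by eventually_elim auto
  then show ?thesis by blast
qed
end
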